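(* Assume the setting described in the context and let $\theta\in\mathbb R^{\mathfrak d}$. Then $$\langle(\nabla V)(\theta),\mathcal G(\theta)\rangle=4L\Big[\int_{[a,b]^{\ell_0}}\big\langle\mathcal N^{L,\theta}_\infty(x)-f(x),\mathcal N^{L,\theta}_\infty(x)-f(0)\big\rangle\,\mu(dx)\Big].$$
   Context: Setting. Let $L,\mathfrak d\in\mathbb N=\{1,2,\dots\}$, $(\ell_k)_{k\in\mathbb N_0}\subseteq\mathbb N$, $a\in\mathbb R$, $b\in(a,\infty)$, $\mathscr A\in(0,\infty)$, $\mathscr B\in(\mathscr A,\infty)$ with $\mathfrak d=\sum_{k=1}^L\ell_k(\ell_{k-1}+1)$; let $\mathbf d_k=\sum_{h=1}^k\ell_h(\ell_{h-1}+1)$ for $k\in\mathbb N_0$. For $\theta=(\theta_1,\dots,\theta_{\mathfrak d})\in\mathbb R^{\mathfrak d}$, $k\in\{1,\dots,L\}$, $i\in\{1,\dots,\ell_k\}$, $j\in\{1,\dots,\ell_{k-1}\}$ let $\mathfrak w^{k,\theta}_{i,j}=\theta_{(i-1)\ell_{k-1}+j+\mathbf d_{k-1}}$ and $\mathfrak b^{k,\theta}_i=\theta_{\ell_k\ell_{k-1}+i+\mathbf d_{k-1}}$, let $\mathfrak w^{k,\theta}=(\mathfrak w^{k,\theta}_{i,j})_{i,j}\in\mathbb R^{\ell_k\times\ell_{k-1}}$, $\mathfrak b^{k,\theta}=(\mathfrak b^{k,\theta}_1,\dots,\mathfrak b^{k,\theta}_{\ell_k})\in\mathbb R^{\ell_k}$,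 and $\mathcal A^\theta_k\colon\mathbb R^{\ell_{k-1}}\to\mathbb R^{\ell_k}$, $\mathcal A^\theta_k(x)=\mathfrak b^{k,\theta}+\mathfrak w^{k,\theta}x$. Let $\mathscr R_\infty(x)=\max\{x,0\}$ and let $\mathscr R_r\colon\mathbb R\to\mathbb R$, $r\in[1,\infty)$, satisfy for all $r\in[1,\infty)$: $\mathscr R_r\in C^1(\mathbb R,\mathbb R)$, $\mathscr R_r(x)=0$ for all $x\le\mathscr A r^{-1}$, $0\le\mathscr R_r(y)\le\max\{y,0\}$ for all $y\in\mathbb R$, $\mathscr R_r(z)=z$ for all $z\ge\mathscr B r^{-1}$; assume $\sup_{r\in[1,\infty)}\sup_{x\in\mathbb R}|(\mathscr R_r)'(x)|<\infty$. $\|\cdot\|$, $\langle\cdot,\cdot\rangle$ are the Euclidean norm and scalar product on each $\mathbb R^n$; for $r\in[1,\infty]$, $\mathfrak M_r(x_1,\dots,x_n)=(\mathscr R_r(x_1),\dots,\mathscr R_r(x_n))$. For $r\in[1,\infty]$, $\theta\in\mathbb R^{\mathfrak d}$ define $\mathcal N^{k,\theta}_r\colon\mathbb R^{\ell_0}\to\mathbb R^{\ell_k}$, $k\in\{1,\dots,L\}$, by $\mathcal N^{1,\theta}_r=\mathcal A^\theta_1$ and $\mathcal N^{k+1,\theta}_r(x)=\mathcal A^\theta_{k+1}(\mathfrak M_{r^{1/k}}(\mathcal N^{k,\theta}_r(x)))$ (with $\infty^{1/k}=\infty$). Let $\mu$ be a measure on the Borel $\sigma$-algebra of $[a,b]^{\ell_0}$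 with $\mu([a,b]^{\ell_0})\in\mathbb R$, let $f=(f_1,\dots,f_{\ell_L})\colon\mathbb R^{\ell_0}\to\mathbb R^{\ell_L}$ be measurable (only its values on $[a,b]^{\ell_0}$ and the value $f(0)$ enter), and for $r\in[1,\infty]$ let $\mathcal L_r\colon\mathbb R^{\mathfrak d}\to\mathbb R$ be given by $\mathcal L_r(\theta)=\int_{[a,b]^{\ell_0}}\|\mathcal N^{L,\theta}_r(x)-f(x)\|^2\,\mu(dx)$ (these integrals are real numbers as part of the setting). Let $\mathcal G\colon\mathbb R^{\mathfrak d}\to\mathbb R^{\mathfrak d}$ satisfy $\mathcal G(\theta)=\lim_{r\to\infty}(\nabla\mathcal L_r)(\theta)$ for every $\theta$ for which $((\nabla\mathcal L_r)(\theta))_{r\in[1,\infty)}$ is convergent as $r\to\infty$. Let $V\colon\mathbb R^{\mathfrak d}\to\mathbb R$, $V(\theta)=\big[\sum_{k=1}^L\big(k\|\mathfrak b^{k,\theta}\|^2+\sum_{i=1}^{\ell_k}\sum_{j=1}^{\ell_{k-1}}|\mathfrak w^{k,\theta}_{i,j}|^2\big)\big]-2L\langle f(0),\mathfrak b^{L,\theta}\rangle$. *)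

theory Defs
  imports "HOL-Analysis.Analysis"
begin

text \<open>Parameter vectors theta in R^dd are elements of real^'d, where the coordinates
  are enumerated by a bijection idx from {1..dd} onto the finite index type 'd;
  theta_i is theta $ idx i.  Layer vectors in R^(l k) are functions nat => real,
  whose entries 1..l k are meaningful.\<close>

definition dsum :: "(nat \<Rightarrow> nat) \<Rightarrow> nat \<Rightarrow> nat" where
  "dsum l k = (\<Sum>h = 1..k. l h * (l (h - 1) + 1))"

definition wgt :: "(nat \<Rightarrow> nat) \<Rightarrow> (nat \<Rightarrow> 'd) \<Rightarrow> real^'d \<Rightarrow> nat \<Rightarrow> nat \<Rightarrow> nat \<Rightarrow> real" where
  "wgt l idx \<theta> k i j = \<theta> $ idx ((i - 1) * l (k - 1) + j + dsum l (k - 1))"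

definition bias :: "(nat \<Rightarrow> nat) \<Rightarrow> (nat \<Rightarrow> 'd) \<Rightarrow> real^'d \<Rightarrow> nat \<Rightarrow> nat \<Rightarrow> real" where
  "bias l idx \<theta> k i = \<theta> $ idx (l k * l (k - 1) + i + dsum l (k - 1))"

definition affine :: "(nat \<Rightarrow> nat) \<Rightarrow> (nat \<Rightarrow> 'd) \<Rightarrow> real^'d \<Rightarrow> nat \<Rightarrow> (nat \<Rightarrow> real) \<Rightarrow> (nat \<Rightarrow> real)" where
  "affine l idx \<theta> k y = (\<lambda>i. if i \<in> {1..l k}
      then bias l idx \<theta> k i + (\<Sum>j = 1..l (k - 1). wgt l idx \<theta> k i j * y j) else 0)"

fun net :: "(nat \<Rightarrow> nat) \<Rightarrow> (nat \<Rightarrow> 'd) \<Rightarrow> real^'d \<Rightarrow> (nat \<Rightarrow> real \<Rightarrow> real) \<Rightarrow> nat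
    \<Rightarrow> (nat \<Rightarrow> real) \<Rightarrow> (nat \<Rightarrow> real)" where
  "net l idx \<theta> act 0 x = (\<lambda>_. 0)"
| "net l idx \<theta> act (Suc 0) x = affine l idx \<theta> 1 x"
| "net l idx \<theta> act (Suc (Suc k)) x =
     affine l idx \<theta> (Suc (Suc k)) (\<lambda>i. act (Suc k) (net l idx \<theta> act (Suc k) x i))"

definition act_fin :: "(real \<Rightarrow> real \<Rightarrow> real) \<Rightarrow> real \<Rightarrow> nat \<Rightarrow> real \<Rightarrow> real" where
  "act_fin R r k = R (r powr (1 / real k))"

definition relu :: "real \<Rightarrow> real" where
  "relu x = max x 0"

definition act_inf :: "nat \<Rightarrow> real \<Rightarrow> real" where
  "act_inf k = relu"

definition risk :: "(nat \<Rightarrow> nat) \<Rightarrow> (nat \<Rightarrow> 'd) \<Rightarrow> nat \<Rightarrow> (nat \<Rightarrow> real \<Rightarrow> real)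
    \<Rightarrow> (nat \<Rightarrow> real) measure \<Rightarrow> ((nat \<Rightarrow> real) \<Rightarrow> (nat \<Rightarrow> real)) \<Rightarrow> real^'d \<Rightarrow> real" where
  "risk l idx L act \<mu> f \<theta> =
     (\<integral>x. (\<Sum>i = 1..l L. (net l idx \<theta> act L x i - f x i)\<^sup>2) \<partial>\<mu>)"

definition lyap :: "(nat \<Rightarrow> nat) \<Rightarrow> (nat \<Rightarrow> 'd) \<Rightarrow> nat \<Rightarrow> ((nat \<Rightarrow> real) \<Rightarrow> (nat \<Rightarrow> real))
    \<Rightarrow> real^'d \<Rightarrow> real" where
  "lyap l idx L f \<theta> =
     (\<Sum>k = 1..L. real k * (\<Sum>i = 1..l k. (bias l idx \<theta> k i)\<^sup>2)
        + (\<Sum>i = 1..l k. \<Sum>j = 1..l (k - 1). (wgt l idx \<theta> k i j)\<^sup>2))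
     - 2 * real L * (\<Sum>i = 1..l L. f (\<lambda>_. 0) i * bias l idx \<theta> L i)"

definition grad :: "('a::real_inner \<Rightarrow> real) \<Rightarrow> 'a \<Rightarrow> 'a" where
  "grad F \<theta> = (THE D. GDERIV F \<theta> :> D)"

end

theory Submission
  imports Defs
begin

(*
  The derivative of the realisation N^L of the network in a parameter direction (B, W) is computed
  by forward propagation. For the smooth activations this is an honest derivative, so
  differentiation under the integral sign, dominated by polynomial bounds on the network and its
  tangent, yields the gradient of the smoothed risk L_r.

  Under the activations R_(r^(1/k)) the error of layer k + 1 is O(r^(-1/k)), which is o(r^(-1/(k+1))),
  the scale on which the activation of that layer differs from ReLU. Hence the activation derivatives
  are eventually exactly 1 or 0, the tangents converge to the ReLU tangent built with the derivative
  1_(y > 0), and by dominated convergence grad L_r(theta) converges componentwise. Thus <G(theta), h>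
  is the integral of the ReLU tangent in direction h.

  For h = grad V(theta) the direction is 2 (k b_k, w_k)_k minus 2 L f(0) in the output bias. Positive
  homogeneity of ReLU gives the Euler identity: the tangent in direction (k b_k, w_k)_k is L N^L, while
  the output bias direction contributes f(0). So the integrand is 2 <N^L - f, 2 L (N^L - f(0))>.
*)

section \<open>Gradients and differentiation under the integral sign\<close>

lemma inner_grad:
  fixes F :: "'a::euclidean_space \<Rightarrow> real"
  assumes "(F has_derivative F') (at \<theta>)"
  shows "grad F \<theta> \<bullet> u = F' u"
proof -
  have lin: "linear F'"
    using assms has_derivative_linear by blast
  then have "F' = (\<lambda>h. h \<bullet> adjoint F' 1)"
    by (simp add: adjoint_works)
  then have gderiv: "GDERIV F \<theta> :> adjoint F' 1"
    unfolding gderiv_def using assms by simp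
  have "grad F \<theta> = adjoint F' 1"
    unfolding grad_def
  proof (rule the_equality)
    show "GDERIV F \<theta> :> adjoint F' 1" by (rule gderiv)
  next
    fix D assume "GDERIV F \<theta> :> D"
    with gderiv have "(\<lambda>h. h \<bullet> D) = (\<lambda>h. h \<bullet> adjoint F' 1)"
      unfolding gderiv_def by (metis has_derivative_unique)
    then show "D = adjoint F' 1"
      by (metis vector_eq_ldot)
  qed
  then show ?thesis
    using adjoint_works[OF lin, of u 1] by (simp add: inner_commute)
qed

lemma integral_dominated_convergence_at:
  fixes s :: "'a::first_countable_topology \<Rightarrow> 'b \<Rightarrow> real"
  assumes "f \<in> borel_measurable M" and "integrable M w"
    and lim: "AE x in M. ((\<lambda>h. s h x) \<longlongrightarrow> f x) (at a)"
    and bound: "\<forall>\<^sub>F h in at a. s h \<in> borel_measurable M \<and> (AE x in M. norm (s h x) \<le> w x)"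
  shows "((\<lambda>h. \<integral>x. s h x \<partial>M) \<longlongrightarrow> \<integral>x. f x \<partial>M) (at a)"
  unfolding tendsto_at_iff_sequentially comp_def
proof (intro allI impI)
  fix X assume "\<forall>n. X n \<in> UNIV - {a}" "X \<longlonglongrightarrow> a"
  then have "filterlim X (at a) sequentially"
    by (simp add: filterlim_at eventually_sequentially)
  from filterlim_iff[THEN iffD1, OF this, rule_format, OF bound]
  obtain N where N: "\<And>n. N \<le> n \<Longrightarrow>
      s (X n) \<in> borel_measurable M \<and> (AE x in M. norm (s (X n) x) \<le> w x)"
    by (auto simp: eventually_sequentially)
  show "(\<lambda>n. \<integral>x. s (X n) x \<partial>M) \<longlonglongrightarrow> \<integral>x. f x \<partial>M"
  proof (rule LIMSEQ_offset[where k=N], rule integral_dominated_convergence)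
    show "AE x in M. (\<lambda>n. s (X (n + N)) x) \<longlonglongrightarrow> f x"
      using lim
    proof eventually_elim
      case (elim x)
      then have "(\<lambda>n. s (X n) x) \<longlonglongrightarrow> f x"
        using \<open>filterlim X (at a) sequentially\<close> by (rule filterlim_compose)
      then show ?case
        by (rule LIMSEQ_ignore_initial_segment)
    qed
    show "s (X (n + N)) \<in> borel_measurable M" "AE x in M. norm (s (X (n + N)) x) \<le> w x" for n
      using N[of "n + N"] by simp_all
  qed (use assms in auto)
qed

lemma bounded_linear_integral:
  assumes lin: "\<And>x. x \<in> space M \<Longrightarrow> linear (D x)"
    and bound: "\<And>x h. x \<in> space M \<Longrightarrow> \<bar>D x h\<bar> \<le> B x * norm h"
    and "integrable M B" and meas: "\<And>h. (\<lambda>x. D x h) \<in> borel_measurable M"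
  shows "bounded_linear (\<lambda>h. \<integral>x. D x h \<partial>M)"
proof -
  have int: "integrable M (\<lambda>x. D x h)" for h
    by (rule Bochner_Integration.integrable_bound[where f="\<lambda>x. B x * norm h"])
       (use assms in \<open>auto intro!: AE_I2 order.trans[OF _ abs_ge_self]\<close>)
  show ?thesis
  proof (rule bounded_linear_intro[where K="\<integral>x. B x \<partial>M"])
    fix h h'
    have "(\<integral>x. D x (h + h') \<partial>M) = (\<integral>x. D x h + D x h' \<partial>M)"
      by (rule Bochner_Integration.integral_cong) (auto simp: linear_add[OF lin])
    then show "(\<integral>x. D x (h + h') \<partial>M) = (\<integral>x. D x h \<partial>M) + (\<integral>x. D x h' \<partial>M)"
      using int by simp
  next
    fix c h
    have "(\<integral>x. D x (c *\<^sub>R h) \<partial>M) = (\<integral>x. c * D x h \<partial>M)"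
      by (rule Bochner_Integration.integral_cong) (auto simp: linear_scale[OF lin])
    then show "(\<integral>x. D x (c *\<^sub>R h) \<partial>M) = c *\<^sub>R (\<integral>x. D x h \<partial>M)"
      by simp
  next
    fix h
    have "norm (\<integral>x. D x h \<partial>M) \<le> (\<integral>x. B x * norm h \<partial>M)"
      by (rule order.trans[OF integral_norm_bound integral_mono]) (use int assms in auto)
    then show "norm (\<integral>x. D x h \<partial>M) \<le> norm h * (\<integral>x. B x \<partial>M)"
      by (simp add: mult.commute)
  qed
qed

lemma abs_diff_le_of_deriv_bound:
  fixes g :: "'a::{real_normed_vector, perfect_space} \<Rightarrow> real"
  assumes "\<And>\<xi>. \<xi> \<in> ball \<theta> \<delta> \<Longrightarrow> (g has_derivative g' \<xi>) (at \<xi>)"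
    and "\<And>\<xi> h. \<xi> \<in> ball \<theta> \<delta> \<Longrightarrow> \<bar>g' \<xi> h\<bar> \<le> B * norm h"
    and "\<eta> \<in> ball \<theta> \<delta>"
  shows "\<bar>g \<eta> - g \<theta>\<bar> \<le> B * norm (\<eta> - \<theta>)"
proof -
  have "norm (g \<eta> - g \<theta>) \<le> B * norm (\<eta> - \<theta>)"
  proof (rule differentiable_bound[where S="ball \<theta> \<delta>" and f'=g'])
    show "(g has_derivative g' \<xi>) (at \<xi> within ball \<theta> \<delta>)" if "\<xi> \<in> ball \<theta> \<delta>" for \<xi>
      using assms(1)[OF that] by (rule has_derivative_at_withinI)
    show "onorm (g' \<xi>) \<le> B" if "\<xi> \<in> ball \<theta> \<delta>" for \<xi>
      by (rule onorm_le) (use assms(2)[OF that] in auto)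
  qed (use assms(3) in \<open>auto intro: le_less_trans[OF zero_le_dist]\<close>)
  then show ?thesis
    by simp
qed

context
  fixes g :: "'a::euclidean_space \<Rightarrow> 'b \<Rightarrow> real" and g' :: "'a \<Rightarrow> 'b \<Rightarrow> 'a \<Rightarrow> real"
    and B :: "'b \<Rightarrow> real" and M :: "'b measure" and \<theta> :: 'a and \<delta> :: real
  assumes "\<delta> > 0"
    and deriv: "\<And>\<xi> x. \<xi> \<in> ball \<theta> \<delta> \<Longrightarrow> x \<in> space M \<Longrightarrow> ((\<lambda>\<eta>. g \<eta> x) has_derivative g' \<xi> x) (at \<xi>)"
    and bound: "\<And>\<xi> x h. \<xi> \<in> ball \<theta> \<delta> \<Longrightarrow> x \<in> space M \<Longrightarrow> \<bar>g' \<xi> x h\<bar> \<le> B x * norm h"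
    and integrable_B: "integrable M B"
    and int: "\<And>\<xi>. \<xi> \<in> ball \<theta> \<delta> \<Longrightarrow> integrable M (g \<xi>)"
    and meas: "\<And>h. (\<lambda>x. g' \<theta> x h) \<in> borel_measurable M"
begin

lemma abs_remainder_le:
  assumes "\<theta> + h \<in> ball \<theta> \<delta>" "x \<in> space M"
  shows "\<bar>g (\<theta> + h) x - g \<theta> x - g' \<theta> x h\<bar> \<le> 2 * B x * norm h"
proof -
  have "\<bar>g (\<theta> + h) x - g \<theta> x\<bar> \<le> B x * norm h"
    using abs_diff_le_of_deriv_bound[where \<theta>=\<theta> and \<delta>=\<delta> and g="\<lambda>\<eta>. g \<eta> x" and g'="\<lambda>\<xi>. g' \<xi> x"
        and B="B x" and \<eta>="\<theta> + h"] deriv[OF _ assms(2)] bound[OF _ assms(2)] assms(1)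
    by simp
  moreover have "\<bar>g' \<theta> x h\<bar> \<le> B x * norm h"
    using bound[OF _ assms(2)] \<open>\<delta> > 0\<close> by simp
  ultimately show ?thesis
    by linarith
qed

lemma tendsto_integral_remainder:
  "((\<lambda>h. ((\<integral>x. g (\<theta> + h) x \<partial>M) - (\<integral>x. g \<theta> x \<partial>M) - (\<integral>x. g' \<theta> x h \<partial>M)) / norm h) \<longlongrightarrow> 0) (at 0)"
proof -
  have \<theta>: "\<theta> \<in> ball \<theta> \<delta>"
    using \<open>\<delta> > 0\<close> by simp
  have int': "integrable M (\<lambda>x. g' \<theta> x h)" for h
    by (rule Bochner_Integration.integrable_bound[where f="\<lambda>x. B x * norm h"])
       (use integrable_B meas bound[OF \<theta>] in \<open>auto intro!: AE_I2 order.trans[OF _ abs_ge_self]\<close>)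
  define q where "q h x = (g (\<theta> + h) x - g \<theta> x - g' \<theta> x h) / norm h" for h x
  have near: "\<forall>\<^sub>F h in at 0. \<theta> + h \<in> ball \<theta> \<delta> \<and> h \<noteq> 0"
    unfolding eventually_at using \<open>\<delta> > 0\<close> by (auto simp: dist_norm)
  have "((\<lambda>h. \<integral>x. q h x \<partial>M) \<longlongrightarrow> \<integral>x. 0 \<partial>M) (at 0)"
  proof (rule integral_dominated_convergence_at[where w="\<lambda>x. 2 * B x"])
    show "AE x in M. ((\<lambda>h. q h x) \<longlongrightarrow> 0) (at 0)"
    proof (rule AE_I2)
      fix x assume "x \<in> space M"
      then have "((\<lambda>h. \<bar>q h x\<bar>) \<longlongrightarrow> 0) (at 0)"
        using deriv[OF \<theta>] unfolding has_derivative_at q_def by (simp add: abs_divide)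
      then show "((\<lambda>h. q h x) \<longlongrightarrow> 0) (at 0)"
        by (simp only: tendsto_rabs_zero_iff)
    qed
    show "\<forall>\<^sub>F h in at 0. q h \<in> borel_measurable M \<and> (AE x in M. norm (q h x) \<le> 2 * B x)"
      using near
    proof eventually_elim
      case (elim h)
      have "AE x in M. norm (q h x) \<le> 2 * B x"
        using elim abs_remainder_le by (auto intro!: AE_I2 simp: q_def abs_divide divide_le_eq)
      moreover have "q h \<in> borel_measurable M"
      proof -
        have [measurable]: "g (\<theta> + h) \<in> borel_measurable M" "g \<theta> \<in> borel_measurable M"
          using int[of "\<theta> + h"] int[OF \<theta>] elim by auto
        show ?thesis
          unfolding q_def using meas[of h] by measurable
      qed
      ultimately show ?case by blast
    qed
  qed (use integrable_B in simp_all)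
  moreover have "\<forall>\<^sub>F h in at 0. (\<integral>x. q h x \<partial>M) =
      ((\<integral>x. g (\<theta> + h) x \<partial>M) - (\<integral>x. g \<theta> x \<partial>M) - (\<integral>x. g' \<theta> x h \<partial>M)) / norm h"
    using near by eventually_elim (use int int' \<theta> in \<open>simp add: q_def\<close>)
  ultimately show ?thesis
    by (simp add: tendsto_cong)
qed

lemma has_derivative_integral:
  "((\<lambda>\<xi>. \<integral>x. g \<xi> x \<partial>M) has_derivative (\<lambda>h. \<integral>x. g' \<theta> x h \<partial>M)) (at \<theta>)"
proof -
  have \<theta>: "\<theta> \<in> ball \<theta> \<delta>"
    using \<open>\<delta> > 0\<close> by simp
  have "bounded_linear (\<lambda>h. \<integral>x. g' \<theta> x h \<partial>M)"
    by (rule bounded_linear_integral[OF _ bound[OF \<theta>] integrable_B meas])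
       (use deriv[OF \<theta>] in \<open>blast intro: has_derivative_linear\<close>)
  with tendsto_rabs[OF tendsto_integral_remainder] show ?thesis
    unfolding has_derivative_at by (simp add: abs_divide)
qed

end

section \<open>Affine layers and parameter tangents of the network\<close>

definition affine_map :: "(nat \<Rightarrow> nat) \<Rightarrow> (nat \<Rightarrow> nat \<Rightarrow> real) \<Rightarrow> (nat \<Rightarrow> nat \<Rightarrow> nat \<Rightarrow> real)
    \<Rightarrow> nat \<Rightarrow> (nat \<Rightarrow> real) \<Rightarrow> nat \<Rightarrow> real" where
  "affine_map l B W k y = (\<lambda>i. if i \<in> {1..l k} then B k i + (\<Sum>j = 1..l (k - 1). W k i j * y j) else 0)"

lemma affine_eq_affine_map: "affine l idx \<theta> = affine_map l (bias l idx \<theta>) (wgt l idx \<theta>)"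
  by (simp add: fun_eq_iff affine_def affine_map_def)

lemma abs_bias_le_norm: "\<bar>bias l idx h k i\<bar> \<le> norm h"
  by (simp add: bias_def component_le_norm_cart)

lemma abs_wgt_le_norm: "\<bar>wgt l idx h k i j\<bar> \<le> norm h"
  by (simp add: wgt_def component_le_norm_cart)

lemma affine_map_cong:
  assumes "\<And>i. i \<in> {1..l k} \<Longrightarrow> B k i = B' k i"
    and "\<And>i j. i \<in> {1..l k} \<Longrightarrow> j \<in> {1..l (k - 1)} \<Longrightarrow> W k i j = W' k i j"
    and "\<And>j. j \<in> {1..l (k - 1)} \<Longrightarrow> y j = y' j"
  shows "affine_map l B W k y = affine_map l B' W' k y'"
  using assms by (auto simp: affine_map_def fun_eq_iff intro!: sum.cong)

lemma affine_map_lincomb: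
  "affine_map l (\<lambda>k i. \<alpha> * B k i + \<beta> * B' k i) (\<lambda>k i j. \<alpha> * W k i j + \<beta> * W' k i j) k y i
   = \<alpha> * affine_map l B W k y i + \<beta> * affine_map l B' W' k y i"
  by (simp add: affine_map_def algebra_simps sum.distrib sum_distrib_left)

lemma affine_map_zero_bias_lincomb:
  "affine_map l (\<lambda>_ _. 0) W k (\<lambda>j. \<alpha> * y j + \<beta> * y' j) i
   = \<alpha> * affine_map l (\<lambda>_ _. 0) W k y i + \<beta> * affine_map l (\<lambda>_ _. 0) W k y' i"
  by (simp add: affine_map_def algebra_simps sum.distrib sum_distrib_left)

lemma affine_map_diff:
  "affine_map l B W k y i - affine_map l B W k y' i = affine_map l (\<lambda>_ _. 0) W k (\<lambda>j. y j - y' j) i"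
  by (simp add: affine_map_def algebra_simps sum_subtractf)

lemma abs_affine_map_le:
  assumes "M \<ge> 0" "M' \<ge> 0" "Y \<ge> 0"
    and "\<And>i. i \<in> {1..l (Suc k)} \<Longrightarrow> \<bar>B (Suc k) i\<bar> \<le> M"
    and "\<And>i j. i \<in> {1..l (Suc k)} \<Longrightarrow> j \<in> {1..l k} \<Longrightarrow> \<bar>W (Suc k) i j\<bar> \<le> M'"
    and "\<And>j. j \<in> {1..l k} \<Longrightarrow> \<bar>y j\<bar> \<le> Y"
  shows "\<bar>affine_map l B W (Suc k) y i\<bar> \<le> M + real (l k) * M' * Y"
proof (cases "i \<in> {1..l (Suc k)}")
  case True
  have "\<bar>\<Sum>j = 1..l k. W (Suc k) i j * y j\<bar> \<le> (\<Sum>j = 1..l k. M' * Y)"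
    using True assms
    by (intro order.trans[OF sum_abs sum_mono]) (auto simp: abs_mult intro: mult_mono')
  then show ?thesis
    using True assms(4)[OF True] by (simp add: affine_map_def mult.assoc)
qed (use assms in \<open>auto simp: affine_map_def\<close>)

lemma borel_measurable_affine_map:
  assumes "\<And>j. j \<in> {1..l k} \<Longrightarrow> (\<lambda>x. y x j) \<in> borel_measurable M"
  shows "(\<lambda>x. affine_map l B W (Suc k) (y x) i) \<in> borel_measurable M"
  unfolding affine_map_def using assms
  by (auto intro!: borel_measurable_sum borel_measurable_times)

lemma tendsto_affine_map:
  assumes "\<And>j. ((\<lambda>r. y r j) \<longlongrightarrow> y' j) F"
  shows "((\<lambda>r. affine_map l B W k (y r) i) \<longlongrightarrow> affine_map l B W k y' i) F"
  unfolding affine_map_def using assms by (auto intro!: tendsto_intros)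

lemma has_derivative_affine_map:
  fixes y :: "real^'d \<Rightarrow> nat \<Rightarrow> real"
  assumes "\<And>j. ((\<lambda>\<xi>. y \<xi> j) has_derivative y' j) (at \<theta>)"
  shows "((\<lambda>\<xi>. affine_map l (bias l idx \<xi>) (wgt l idx \<xi>) k (y \<xi>) i) has_derivative
    (\<lambda>h. affine_map l (bias l idx h) (wgt l idx h) k (y \<theta>) i
       + affine_map l (\<lambda>_ _. 0) (wgt l idx \<theta>) k (\<lambda>j. y' j h) i)) (at \<theta>)"
proof -
  have coord: "((\<lambda>\<xi>. \<xi> $ c) has_derivative (\<lambda>h. h $ c)) F" for c :: 'd and F
    by (intro bounded_linear_imp_has_derivative bounded_linear_vec_nth)
  show ?thesis
    unfolding affine_map_def bias_def wgt_def
    by (cases "i \<in> {1..l k}")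
       (auto intro!: derivative_eq_intros coord assms simp: algebra_simps sum.distrib)
qed

definition layer_input :: "(nat \<Rightarrow> nat) \<Rightarrow> (nat \<Rightarrow> 'd) \<Rightarrow> real^'d \<Rightarrow> (nat \<Rightarrow> real \<Rightarrow> real) \<Rightarrow> nat
    \<Rightarrow> (nat \<Rightarrow> real) \<Rightarrow> nat \<Rightarrow> real" where
  "layer_input l idx \<theta> act k x = (if k = 0 then x else (\<lambda>j. act k (net l idx \<theta> act k x j)))"

lemma net_Suc:
  "net l idx \<theta> act (Suc k) x = affine_map l (bias l idx \<theta>) (wgt l idx \<theta>) (Suc k) (layer_input l idx \<theta> act k x)"
  by (cases k) (simp_all add: layer_input_def affine_eq_affine_map)

lemma net_zero_params: "net l idx 0 act k x i = 0"
  by (cases k) (simp_all add: net_Suc affine_map_def bias_def wgt_def)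

text \<open>The parameter direction is given by its bias part \<open>B\<close> and its weight part \<open>W\<close>; \<open>act'\<close> plays the
  role of the derivative of \<open>act\<close>.\<close>

fun net_tangent :: "(nat \<Rightarrow> nat) \<Rightarrow> (nat \<Rightarrow> 'd) \<Rightarrow> real^'d \<Rightarrow> (nat \<Rightarrow> real \<Rightarrow> real)
    \<Rightarrow> (nat \<Rightarrow> real \<Rightarrow> real) \<Rightarrow> (nat \<Rightarrow> real) \<Rightarrow> (nat \<Rightarrow> nat \<Rightarrow> real) \<Rightarrow> (nat \<Rightarrow> nat \<Rightarrow> nat \<Rightarrow> real)
    \<Rightarrow> nat \<Rightarrow> nat \<Rightarrow> real" where
  "net_tangent l idx \<theta> act act' x B W 0 = (\<lambda>_. 0)"
| "net_tangent l idx \<theta> act act' x B W (Suc k) = (\<lambda>i.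
     affine_map l B W (Suc k) (layer_input l idx \<theta> act k x) i
     + affine_map l (\<lambda>_ _. 0) (wgt l idx \<theta>) (Suc k)
         (\<lambda>j. act' k (net l idx \<theta> act k x j) * net_tangent l idx \<theta> act act' x B W k j) i)"

lemma has_derivative_net:
  assumes act': "\<And>k y. (act k has_real_derivative act' k y) (at y)"
  shows "((\<lambda>\<xi>. net l idx \<xi> act k x i) has_derivative
    (\<lambda>h. net_tangent l idx \<theta> act act' x (bias l idx h) (wgt l idx h) k i)) (at \<theta>)"
proof (induction k arbitrary: i)
  case 0
  show ?case by simp
next
  case (Suc k)
  have "((\<lambda>\<xi>. layer_input l idx \<xi> act k x j) has_derivative
      (\<lambda>h. act' k (net l idx \<theta> act k x j)
         * net_tangent l idx \<theta> act act' x (bias l idx h) (wgt l idx h) k j)) (at \<theta>)"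
    for j
  proof (cases "k = 0")
    case False
    show ?thesis
      using has_derivative_compose[OF Suc.IH act'[unfolded has_field_derivative_def]] False
      by (simp add: layer_input_def mult.commute)
  qed (simp add: layer_input_def)
  from has_derivative_affine_map[OF this] show ?case
    by (simp only: net_Suc net_tangent.simps)
qed

lemma net_tangent_cong:
  assumes "\<And>k' i. k' \<in> {1..k} \<Longrightarrow> i \<in> {1..l k'} \<Longrightarrow> B k' i = B' k' i"
    and "\<And>k' i j. k' \<in> {1..k} \<Longrightarrow> i \<in> {1..l k'} \<Longrightarrow> j \<in> {1..l (k' - 1)} \<Longrightarrow> W k' i j = W' k' i j"
  shows "net_tangent l idx \<theta> act act' x B W k = net_tangent l idx \<theta> act act' x B' W' k"
  using assms
proof (induction k)
  case (Suc k)
  have "affine_map l B W (Suc k) = affine_map l B' W' (Suc k)"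
    using Suc.prems by (intro ext affine_map_cong) auto
  then show ?case
    using Suc by simp
qed simp

lemma net_tangent_lincomb:
  "net_tangent l idx \<theta> act act' x (\<lambda>k i. \<alpha> * B k i + \<beta> * B' k i) (\<lambda>k i j. \<alpha> * W k i j + \<beta> * W' k i j) k i
   = \<alpha> * net_tangent l idx \<theta> act act' x B W k i + \<beta> * net_tangent l idx \<theta> act act' x B' W' k i"
proof (induction k arbitrary: i)
  case (Suc k)
  then show ?case
    using affine_map_zero_bias_lincomb[of l "wgt l idx \<theta>" "Suc k" \<alpha>
        "\<lambda>j. act' k (net l idx \<theta> act k x j) * net_tangent l idx \<theta> act act' x B W k j" \<beta>
        "\<lambda>j. act' k (net l idx \<theta> act k x j) * net_tangent l idx \<theta> act act' x B' W' k j" i]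
    by (simp add: affine_map_lincomb algebra_simps)
qed simp

definition act_inf_deriv :: "nat \<Rightarrow> real \<Rightarrow> real" where
  "act_inf_deriv k y = (if y > 0 then 1 else 0)"

text \<open>Euler's identity: scaling the biases of layer \<open>j\<close> by \<open>t ^ j\<close> and all weights by \<open>t\<close> scales
  the output of layer \<open>k\<close> of a ReLU network by \<open>t ^ k\<close>.\<close>

lemma net_tangent_relu_homogeneous:
  "net_tangent l idx \<theta> act_inf act_inf_deriv x (\<lambda>k i. real k * bias l idx \<theta> k i) (wgt l idx \<theta>) k i
   = real k * net l idx \<theta> act_inf k x i"
proof (induction k arbitrary: i)
  case (Suc k)
  have relu: "act_inf k y = max y 0" for y
    by (simp add: act_inf_def relu_def)
  have "act_inf_deriv k (net l idx \<theta> act_inf k x j)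
      * net_tangent l idx \<theta> act_inf act_inf_deriv x (\<lambda>k i. real k * bias l idx \<theta> k i) (wgt l idx \<theta>) k j
      = real k * layer_input l idx \<theta> act_inf k x j" for j
    by (simp only: Suc.IH) (simp add: layer_input_def act_inf_deriv_def relu)
  then show ?case
    by (simp add: net_Suc affine_map_def algebra_simps sum.distrib sum_distrib_left)
qed simp

lemma net_tangent_output_bias:
  assumes "L \<ge> 1"
  shows "net_tangent l idx \<theta> act act' x (\<lambda>k i. if k = L then c i else 0) (\<lambda>_ _ _. 0) L i
    = (if i \<in> {1..l L} then c i else 0)"
proof -
  have below: "k < L \<Longrightarrow> net_tangent l idx \<theta> act act' x (\<lambda>k i. if k = L then c i else 0) (\<lambda>_ _ _. 0) k = (\<lambda>_. 0)"
    for k by (induction k) (auto simp: affine_map_def fun_eq_iff)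
  obtain k where "L = Suc k"
    using assms by (cases L) auto
  then show ?thesis
    using below[of k] by (simp add: affine_map_def)
qed

section \<open>Parameter layout and the gradient of the Lyapunov function\<close>

definition wgt_index :: "(nat \<Rightarrow> nat) \<Rightarrow> nat \<Rightarrow> nat \<Rightarrow> nat \<Rightarrow> nat" where
  "wgt_index l k i j = (i - 1) * l (k - 1) + j + dsum l (k - 1)"

definition bias_index :: "(nat \<Rightarrow> nat) \<Rightarrow> nat \<Rightarrow> nat \<Rightarrow> nat" where
  "bias_index l k i = l k * l (k - 1) + i + dsum l (k - 1)"

lemma wgt_eq_index: "wgt l idx \<theta> k i j = \<theta> $ idx (wgt_index l k i j)"
  by (simp add: wgt_def wgt_index_def)

lemma bias_eq_index: "bias l idx \<theta> k i = \<theta> $ idx (bias_index l k i)"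
  by (simp add: bias_def bias_index_def)

lemma dsum_Suc: "dsum l (Suc k) = dsum l k + l (Suc k) * (l k + 1)"
  by (simp add: dsum_def)

lemma dsum_mono: "k \<le> k' \<Longrightarrow> dsum l k \<le> dsum l k'"
  unfolding dsum_def by (rule sum_mono2) auto

text \<open>Layer \<open>k\<close> occupies the positions \<open>dsum l (k - 1) < p \<le> dsum l k\<close>: first its weights, row by row,
  then its biases.\<close>

lemma wgt_index_bounds:
  assumes "k \<ge> 1" "i \<in> {1..l k}" "j \<in> {1..l (k - 1)}"
  shows "dsum l (k - 1) < wgt_index l k i j" "wgt_index l k i j \<le> dsum l (k - 1) + l k * l (k - 1)"
proof -
  have "(i - 1) * l (k - 1) + j \<le> (l k - 1) * l (k - 1) + l (k - 1)"
    using assms by (intro add_mono mult_le_mono1) auto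
  also have "\<dots> = l k * l (k - 1)"
    using assms by (cases "l k") auto
  finally show "wgt_index l k i j \<le> dsum l (k - 1) + l k * l (k - 1)"
    by (simp add: wgt_index_def)
  show "dsum l (k - 1) < wgt_index l k i j"
    using assms by (simp add: wgt_index_def)
qed

lemma bias_index_bounds:
  assumes "k \<ge> 1" "i \<in> {1..l k}"
  shows "dsum l (k - 1) + l k * l (k - 1) < bias_index l k i" "bias_index l k i \<le> dsum l k"
  using assms dsum_Suc[of l "k - 1"] by (auto simp: bias_index_def algebra_simps)

lemma dsum_layer_unique:
  assumes "k \<ge> 1" "k' \<ge> 1" "dsum l (k - 1) < p" "p \<le> dsum l k" "dsum l (k' - 1) < p" "p \<le> dsum l k'"
  shows "k = k'"
proof (rule ccontr)
  assume "k \<noteq> k'"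
  then have "dsum l k \<le> dsum l (k' - 1) \<or> dsum l k' \<le> dsum l (k - 1)"
    by (metis dsum_mono le_diff_conv2 linorder_neqE_nat Suc_leI add.commute plus_1_eq_Suc assms(1,2))
  then show False
    using assms by linarith
qed

lemma bias_index_inj:
  assumes "k \<ge> 1" "i \<in> {1..l k}" "k' \<ge> 1" "i' \<in> {1..l k'}" "bias_index l k i = bias_index l k' i'"
  shows "k = k' \<and> i = i'"
proof -
  have "k = k'"
    using bias_index_bounds[of k i l] bias_index_bounds[of k' i' l] assms
    by (intro dsum_layer_unique[of k k' l "bias_index l k i"]) auto
  then show ?thesis
    using assms by (simp add: bias_index_def)
qed

lemma wgt_index_inj:
  assumes "k \<ge> 1" "i \<in> {1..l k}" "j \<in> {1..l (k - 1)}"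
    and "k' \<ge> 1" "i' \<in> {1..l k'}" "j' \<in> {1..l (k' - 1)}"
    and eq: "wgt_index l k i j = wgt_index l k' i' j'"
  shows "k = k' \<and> i = i' \<and> j = j'"
proof -
  have "k = k'"
    using wgt_index_bounds[of k i l j] wgt_index_bounds[of k' i' l j'] assms
      dsum_Suc[of l "k - 1"] dsum_Suc[of l "k' - 1"]
    by (intro dsum_layer_unique[of k k' l "wgt_index l k i j"]) auto
  moreover have "i = i' \<and> j = j'"
  proof -
    define m where "m = l (k - 1)"
    have "(i - 1) * m + (j - 1) = (i' - 1) * m + (j' - 1)"
      using eq assms \<open>k = k'\<close> by (auto simp: wgt_index_def m_def)
    moreover have "j - 1 < m" "j' - 1 < m"
      using assms \<open>k = k'\<close> by (auto simp: m_def)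
    ultimately have "((i - 1) * m + (j - 1)) div m = ((i' - 1) * m + (j' - 1)) div m"
      "((i - 1) * m + (j - 1)) mod m = ((i' - 1) * m + (j' - 1)) mod m"
      "j - 1 < m" "j' - 1 < m"
      by simp_all
    then have "i - 1 = i' - 1" "j - 1 = j' - 1"
      by simp_all
    then show ?thesis
      using assms by auto
  qed
  ultimately show ?thesis
    by blast
qed

lemma wgt_index_neq_bias_index:
  assumes "k \<ge> 1" "i \<in> {1..l k}" "j \<in> {1..l (k - 1)}" "k' \<ge> 1" "i' \<in> {1..l k'}"
  shows "wgt_index l k i j \<noteq> bias_index l k' i'"
proof
  assume eq: "wgt_index l k i j = bias_index l k' i'"
  have "k = k'"
    using wgt_index_bounds[of k i l j] bias_index_bounds[of k' i' l] assms eq dsum_Suc[of l "k - 1"]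
    by (intro dsum_layer_unique[of k k' l "wgt_index l k i j"]) auto
  then show False
    using wgt_index_bounds[of k i l j] bias_index_bounds[of k' i' l] assms eq by simp
qed

lemma bias_index_range:
  assumes "k \<in> {1..L}" "i \<in> {1..l k}"
  shows "bias_index l k i \<in> {1..dsum l L}"
  using bias_index_bounds[of k i l] dsum_mono[of k L l] assms by (auto simp: bias_index_def)

lemma wgt_index_range:
  assumes "k \<in> {1..L}" "i \<in> {1..l k}" "j \<in> {1..l (k - 1)}"
  shows "wgt_index l k i j \<in> {1..dsum l L}"
  using wgt_index_bounds[of k i l j] dsum_Suc[of l "k - 1"] dsum_mono[of k L l] assms
  by (auto simp: wgt_index_def)

lemma axis_idx_nth:
  assumes "inj_on idx S" "p \<in> S" "q \<in> S"
  shows "(axis (idx p) 1 :: real^'d) $ idx q = (if q = p then 1 else 0)"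
  using assms by (auto simp: axis_def inj_on_eq_iff)

lemma has_derivative_lyap:
  "(lyap l idx L f has_derivative (\<lambda>h.
      (\<Sum>k = 1..L. real k * (\<Sum>i = 1..l k. 2 * bias l idx \<theta> k i * bias l idx h k i)
        + (\<Sum>i = 1..l k. \<Sum>j = 1..l (k - 1). 2 * wgt l idx \<theta> k i j * wgt l idx h k i j))
      - 2 * real L * (\<Sum>i = 1..l L. f (\<lambda>_. 0) i * bias l idx h L i))) (at \<theta>)"
proof -
  have coord: "((\<lambda>\<xi>. \<xi> $ c) has_derivative (\<lambda>h. h $ c)) (at \<theta>)" for c
    by (intro bounded_linear_imp_has_derivative bounded_linear_vec_nth)
  show ?thesis
    unfolding lyap_def[abs_def] bias_def wgt_def
    by (auto intro!: derivative_eq_intros coord simp: sum_distrib_left algebra_simps)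
qed

lemma bias_grad_lyap:
  fixes idx :: "nat \<Rightarrow> 'd::finite"
  assumes inj: "inj_on idx {1..dsum l L}" and k: "k \<in> {1..L}" and i: "i \<in> {1..l k}"
  shows "bias l idx (grad (lyap l idx L f) \<theta>) k i
    = 2 * real k * bias l idx \<theta> k i - (if k = L then 2 * real L * f (\<lambda>_. 0) i else 0)"
proof -
  define e :: "real^'d" where "e = axis (idx (bias_index l k i)) 1"
  have be: "bias l idx e k' i' = (if k' = k \<and> i' = i then 1 else 0)"
    if "k' \<in> {1..L}" "i' \<in> {1..l k'}" for k' i'
    using axis_idx_nth[OF inj bias_index_range[where l=l, OF k i] bias_index_range[where l=l, OF that]]
      bias_index_inj[of k' i' l k i] that k i
    by (auto simp: e_def bias_eq_index)
  have we: "wgt l idx e k' i' j' = 0"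
    if "k' \<in> {1..L}" "i' \<in> {1..l k'}" "j' \<in> {1..l (k' - 1)}" for k' i' j'
    using axis_idx_nth[OF inj bias_index_range[where l=l, OF k i] wgt_index_range[where l=l, OF that]]
      wgt_index_neq_bias_index[of k' i' l j' k i] that k i
    by (auto simp: e_def wgt_eq_index)
  have collapse: "(\<Sum>i' = 1..l k'. c i' * bias l idx e k' i') = (if k' = k then c i else 0)"
    if "k' \<in> {1..L}" for c k'
  proof -
    have "(\<Sum>i' = 1..l k'. c i' * bias l idx e k' i')
        = (\<Sum>i' = 1..l k'. if k' = k then (if i' = i then c i' else 0) else 0)"
      using that by (intro sum.cong) (simp_all add: be)
    then show ?thesis
      using i by simp
  qed
  have "bias l idx (grad (lyap l idx L f) \<theta>) k i = grad (lyap l idx L f) \<theta> \<bullet> e"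
    by (simp add: e_def bias_eq_index cart_eq_inner_axis)
  also have "\<dots> = (\<Sum>k' = 1..L. real k' * (\<Sum>i' = 1..l k'. 2 * bias l idx \<theta> k' i' * bias l idx e k' i')
        + (\<Sum>i' = 1..l k'. \<Sum>j' = 1..l (k' - 1). 2 * wgt l idx \<theta> k' i' j' * wgt l idx e k' i' j'))
      - 2 * real L * (\<Sum>i' = 1..l L. f (\<lambda>_. 0) i' * bias l idx e L i')"
    by (rule inner_grad[OF has_derivative_lyap])
  also have "\<dots> = 2 * real k * bias l idx \<theta> k i - (if k = L then 2 * real L * f (\<lambda>_. 0) i else 0)"
    \<comment> \<open>the simplifier writes the summation ranges \<open>{1..n}\<close> as \<open>{Suc 0..n}\<close>\<close>
    using k i by (simp add: collapse[unfolded One_nat_def] we if_distrib[of "\<lambda>x. _ * x"] sum.delta cong: if_cong)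
  finally show ?thesis .
qed

lemma wgt_grad_lyap:
  fixes idx :: "nat \<Rightarrow> 'd::finite"
  assumes inj: "inj_on idx {1..dsum l L}"
    and k: "k \<in> {1..L}" and i: "i \<in> {1..l k}" and j: "j \<in> {1..l (k - 1)}"
  shows "wgt l idx (grad (lyap l idx L f) \<theta>) k i j = 2 * wgt l idx \<theta> k i j"
proof -
  define e :: "real^'d" where "e = axis (idx (wgt_index l k i j)) 1"
  have be: "bias l idx e k' i' = 0"
    if "k' \<in> {1..L}" "i' \<in> {1..l k'}" for k' i'
    using axis_idx_nth[OF inj wgt_index_range[where l=l, OF k i j] bias_index_range[where l=l, OF that]]
      wgt_index_neq_bias_index[of k i l j k' i'] that k i j
    by (auto simp: e_def bias_eq_index)
  have we: "wgt l idx e k' i' j' = (if k' = k \<and> i' = i \<and> j' = j then 1 else 0)"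
    if "k' \<in> {1..L}" "i' \<in> {1..l k'}" "j' \<in> {1..l (k' - 1)}" for k' i' j'
    using axis_idx_nth[OF inj wgt_index_range[where l=l, OF k i j] wgt_index_range[where l=l, OF that]]
      wgt_index_inj[of k' i' l j' k i j] that k i j
    by (auto simp: e_def wgt_eq_index)
  have collapse: "(\<Sum>i' = 1..l k'. \<Sum>j' = 1..l (k' - 1). c i' j' * wgt l idx e k' i' j')
      = (if k' = k then c i j else 0)"
    if "k' \<in> {1..L}" for c k'
  proof -
    have "(\<Sum>i' = 1..l k'. \<Sum>j' = 1..l (k' - 1). c i' j' * wgt l idx e k' i' j')
        = (\<Sum>i' = 1..l k'. if k' = k \<and> i' = i then (\<Sum>j' = 1..l (k' - 1). if j' = j then c i' j' else 0) else 0)"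
      using that i j by (auto simp: we if_distrib[of "\<lambda>x. _ * x"] cong: if_cong intro!: sum.cong)
    then show ?thesis
      using i j by (simp cong: if_cong)
  qed
  have "wgt l idx (grad (lyap l idx L f) \<theta>) k i j = grad (lyap l idx L f) \<theta> \<bullet> e"
    by (simp add: e_def wgt_eq_index cart_eq_inner_axis)
  also have "\<dots> = (\<Sum>k' = 1..L. real k' * (\<Sum>i' = 1..l k'. 2 * bias l idx \<theta> k' i' * bias l idx e k' i')
        + (\<Sum>i' = 1..l k'. \<Sum>j' = 1..l (k' - 1). 2 * wgt l idx \<theta> k' i' j' * wgt l idx e k' i' j'))
      - 2 * real L * (\<Sum>i' = 1..l L. f (\<lambda>_. 0) i' * bias l idx e L i')"
    by (rule inner_grad[OF has_derivative_lyap])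
  also have "\<dots> = 2 * wgt l idx \<theta> k i j"
    using k by (simp add: collapse[unfolded One_nat_def] be sum.delta cong: if_cong)
  finally show ?thesis .
qed

fun input_bound :: "(nat \<Rightarrow> nat) \<Rightarrow> real \<Rightarrow> real \<Rightarrow> nat \<Rightarrow> real" where
  "input_bound l M X 0 = X"
| "input_bound l M X (Suc k) = M + real (l k) * M * input_bound l M X k"

fun tangent_bound :: "(nat \<Rightarrow> nat) \<Rightarrow> real \<Rightarrow> real \<Rightarrow> real \<Rightarrow> nat \<Rightarrow> real" where
  "tangent_bound l M X C 0 = 0"
| "tangent_bound l M X C (Suc k)
     = 1 + real (l k) * input_bound l M X k + real (l k) * M * C * tangent_bound l M X C k"

lemma input_bound_nonneg: "M \<ge> 0 \<Longrightarrow> X \<ge> 0 \<Longrightarrow> input_bound l M X k \<ge> 0"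
  by (induction k) auto

lemma tangent_bound_nonneg: "M \<ge> 0 \<Longrightarrow> X \<ge> 0 \<Longrightarrow> C \<ge> 0 \<Longrightarrow> tangent_bound l M X C k \<ge> 0"
  by (induction k) (auto intro!: add_nonneg_nonneg mult_nonneg_nonneg input_bound_nonneg)

context
  fixes l :: "nat \<Rightarrow> nat" and idx :: "nat \<Rightarrow> 'd::finite" and M X :: real and \<xi> :: "real^'d"
    and x :: "nat \<Rightarrow> real" and act :: "nat \<Rightarrow> real \<Rightarrow> real"
  assumes M: "M \<ge> 0" and \<xi>: "\<And>c. \<bar>\<xi> $ c\<bar> \<le> M"
    and X: "X \<ge> 0" and x: "\<And>j. j \<in> {1..l 0} \<Longrightarrow> \<bar>x j\<bar> \<le> X"
    and act: "\<And>k y. \<bar>act k y\<bar> \<le> \<bar>y\<bar>"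
begin

lemma abs_wgt_le: "\<bar>wgt l idx \<xi> k i j\<bar> \<le> M"
  using \<xi> by (simp add: wgt_def)

lemma abs_net_le: "\<bar>net l idx \<xi> act k x i\<bar> \<le> input_bound l M X k"
proof (induction k arbitrary: i)
  case 0
  show ?case using X by simp
next
  case (Suc k)
  have "\<bar>layer_input l idx \<xi> act k x j\<bar> \<le> input_bound l M X k" if "j \<in> {1..l k}" for j
    using x[of j] act[of k "net l idx \<xi> act k x j"] Suc.IH[of j] that
    by (auto simp: layer_input_def)
  then show ?case
    unfolding net_Suc using \<xi> M input_bound_nonneg[OF M X]
    by (auto simp: bias_def wgt_def intro!: abs_affine_map_le)
qed

lemma abs_layer_input_le:
  "j \<in> {1..l k} \<Longrightarrow> \<bar>layer_input l idx \<xi> act k x j\<bar> \<le> input_bound l M X k"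
  using x[of j] act[of k "net l idx \<xi> act k x j"] abs_net_le[where k=k and i=j]
  by (auto simp: layer_input_def)

lemma abs_net_tangent_le:
  fixes h :: "real^'d"
  assumes C: "C \<ge> 0" and act': "\<And>k y. \<bar>act' k y\<bar> \<le> C"
  shows "\<bar>net_tangent l idx \<xi> act act' x (bias l idx h) (wgt l idx h) k i\<bar> \<le> tangent_bound l M X C k * norm h"
proof (induction k arbitrary: i)
  case (Suc k)
  let ?T = "net_tangent l idx \<xi> act act' x (bias l idx h) (wgt l idx h)"
  have "\<bar>affine_map l (bias l idx h) (wgt l idx h) (Suc k) (layer_input l idx \<xi> act k x) i\<bar>
      \<le> norm h + real (l k) * norm h * input_bound l M X k"
    using abs_layer_input_le input_bound_nonneg[OF M X]
    by (intro abs_affine_map_le) (auto simp: abs_bias_le_norm abs_wgt_le_norm)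
  moreover have "\<bar>affine_map l (\<lambda>_ _. 0) (wgt l idx \<xi>) (Suc k) (\<lambda>j. act' k (net l idx \<xi> act k x j) * ?T k j) i\<bar>
      \<le> 0 + real (l k) * M * (C * (tangent_bound l M X C k * norm h))"
    using M C abs_wgt_le \<xi> act' Suc.IH tangent_bound_nonneg[OF M X C]
    by (intro abs_affine_map_le) (auto simp: abs_mult intro!: mult_mono)
  ultimately show ?case
    by (simp add: algebra_simps)
qed simp

end

lemma borel_measurable_net[measurable]:
  assumes x: "\<And>j. j \<in> {1..l 0} \<Longrightarrow> (\<lambda>x. x j) \<in> borel_measurable M"
    and act[measurable]: "\<And>k. act k \<in> borel_measurable borel"
  shows "(\<lambda>x. net l idx \<theta> act k x i) \<in> borel_measurable M"
proof (induction k arbitrary: i)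
  case (Suc k)
  have "(\<lambda>x. layer_input l idx \<theta> act k x j) \<in> borel_measurable M" if "j \<in> {1..l k}" for j
    using that x measurable_compose[OF Suc.IH act] by (cases "k = 0") (auto simp: layer_input_def)
  then show ?case
    unfolding net_Suc by (rule borel_measurable_affine_map)
qed simp

lemma borel_measurable_net_tangent:
  assumes x: "\<And>j. j \<in> {1..l 0} \<Longrightarrow> (\<lambda>x. x j) \<in> borel_measurable M"
    and act[measurable]: "\<And>k. act k \<in> borel_measurable borel"
    and act'[measurable]: "\<And>k. act' k \<in> borel_measurable borel"
  shows "(\<lambda>x. net_tangent l idx \<theta> act act' x B W k i) \<in> borel_measurable M"
proof (induction k arbitrary: i)
  case (Suc k)
  have "(\<lambda>x. layer_input l idx \<theta> act k x j) \<in> borel_measurable M" if "j \<in> {1..l k}" for j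
    using that x measurable_compose[OF borel_measurable_net[OF x act] act]
    by (cases "k = 0") (auto simp: layer_input_def)
  moreover have "(\<lambda>x. act' k (net l idx \<theta> act k x j) * net_tangent l idx \<theta> act act' x B W k j)
      \<in> borel_measurable M" for j
    using borel_measurable_net[OF x act] Suc.IH by measurable
  ultimately show ?case
    by (simp only: net_tangent.simps) (intro borel_measurable_add borel_measurable_affine_map; blast)
qed simp

section \<open>Differentiability of the risk\<close>

lemma abs_le_1_plus_square: "\<bar>t :: real\<bar> \<le> 1 + t\<^sup>2"
  using zero_le_power2[of "\<bar>t\<bar> - 1/2"] by (simp add: power2_eq_square algebra_simps)

locale risk_setting =
  fixes L :: nat and l :: "nat \<Rightarrow> nat" and idx :: "nat \<Rightarrow> 'd::finite" and a b :: real
    and \<mu> :: "(nat \<Rightarrow> real) measure" and f :: "(nat \<Rightarrow> real) \<Rightarrow> nat \<Rightarrow> real"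
  assumes L_pos: "L \<ge> 1"
    and sets_mu: "sets \<mu> = sets (Pi\<^sub>M {1..l 0} (\<lambda>_. restrict_space lborel {a..b}))"
    and finite_mu: "emeasure \<mu> (space \<mu>) < \<infinity>"
    and f_meas[measurable]: "\<And>i. (\<lambda>x. f x i) \<in> borel_measurable \<mu>"
    and f_square_integrable: "integrable \<mu> (\<lambda>x. \<Sum>i = 1..l L. (f x i)\<^sup>2)"
begin

lemma abs_input_le:
  assumes "x \<in> space \<mu>" "j \<in> {1..l 0}"
  shows "\<bar>x j\<bar> \<le> \<bar>a\<bar> + \<bar>b\<bar>"
proof -
  have "space \<mu> = PiE {1..l 0} (\<lambda>_. {a..b})"
    using sets_eq_imp_space_eq[OF sets_mu] by (simp add: space_PiM)
  then have "x j \<in> {a..b}"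
    using assms by (auto simp: PiE_iff)
  then show ?thesis
    by auto
qed

lemma borel_measurable_input:
  assumes "j \<in> {1..l 0}"
  shows "(\<lambda>x. x j) \<in> borel_measurable \<mu>"
proof -
  have "(\<lambda>x. x j) \<in> Pi\<^sub>M {1..l 0} (\<lambda>_. restrict_space lborel {a..b}) \<rightarrow>\<^sub>M restrict_space lborel {a..b}"
    using assms by (rule measurable_component_singleton)
  moreover have "(\<lambda>x. x) \<in> restrict_space lborel {a..b} \<rightarrow>\<^sub>M borel"
    by (intro measurable_restrict_space1 measurable_ident_sets) simp
  ultimately show ?thesis
    using measurable_cong_sets[OF sets_mu refl] measurable_compose by blast
qed

lemma integrable_abs_f:
  assumes "i \<in> {1..l L}"
  shows "integrable \<mu> (\<lambda>x. \<bar>f x i\<bar>)"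
proof (rule Bochner_Integration.integrable_bound)
  show "integrable \<mu> (\<lambda>x. 1 + (\<Sum>i = 1..l L. (f x i)\<^sup>2))"
    using finite_mu f_square_integrable by (simp add: finite_measure.integrable_const finite_measureI)
  have "\<bar>f x i\<bar> \<le> 1 + (\<Sum>i = 1..l L. (f x i)\<^sup>2)" for x
    using abs_le_1_plus_square[of "f x i"] member_le_sum[of i "{1..l L}" "\<lambda>i. (f x i)\<^sup>2"] assms by simp
  then show "AE x in \<mu>. norm \<bar>f x i\<bar> \<le> norm (1 + (\<Sum>i = 1..l L. (f x i)\<^sup>2))"
    by (auto intro!: AE_I2 simp: sum_nonneg)
qed simp

definition loss_deriv :: "(nat \<Rightarrow> real \<Rightarrow> real) \<Rightarrow> (nat \<Rightarrow> real \<Rightarrow> real) \<Rightarrow> real^'d \<Rightarrow> (nat \<Rightarrow> real)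
    \<Rightarrow> real^'d \<Rightarrow> real" where
  "loss_deriv act act' \<xi> x h = (\<Sum>i = 1..l L. 2 * (net l idx \<xi> act L x i - f x i)
      * net_tangent l idx \<xi> act act' x (bias l idx h) (wgt l idx h) L i)"

definition loss_majorant :: "real \<Rightarrow> real \<Rightarrow> (nat \<Rightarrow> real) \<Rightarrow> real" where
  "loss_majorant M C x = (\<Sum>i = 1..l L. 2 * (input_bound l M (\<bar>a\<bar> + \<bar>b\<bar>) L + \<bar>f x i\<bar>)
      * tangent_bound l M (\<bar>a\<bar> + \<bar>b\<bar>) C L)"

lemma integrable_loss_majorant: "integrable \<mu> (loss_majorant M C)"
  unfolding loss_majorant_def using finite_mu
  by (intro Bochner_Integration.integrable_sum integrable_mult_left integrable_mult_right
      Bochner_Integration.integrable_add integrable_abs_f finite_measure.integrable_const finite_measureI)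
    auto

lemma abs_loss_deriv_le:
  assumes "M \<ge> 0" "\<And>c. \<bar>\<xi> $ c\<bar> \<le> M" "x \<in> space \<mu>" "\<And>k y. \<bar>act k y\<bar> \<le> \<bar>y\<bar>"
    and "C \<ge> 0" "\<And>k y. \<bar>act' k y\<bar> \<le> C"
  shows "\<bar>loss_deriv act act' \<xi> x h\<bar> \<le> loss_majorant M C x * norm h"
proof -
  let ?X = "\<bar>a\<bar> + \<bar>b\<bar>"
  have "\<bar>loss_deriv act act' \<xi> x h\<bar>
      \<le> (\<Sum>i = 1..l L. 2 * (input_bound l M ?X L + \<bar>f x i\<bar>) * (tangent_bound l M ?X C L * norm h))"
    unfolding loss_deriv_def
  proof (rule order.trans[OF sum_abs sum_mono])
    fix i
    have "\<bar>net l idx \<xi> act L x i\<bar> \<le> input_bound l M ?X L"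
      by (rule abs_net_le) (use assms abs_input_le in auto)
    moreover have "\<bar>net_tangent l idx \<xi> act act' x (bias l idx h) (wgt l idx h) L i\<bar>
        \<le> tangent_bound l M ?X C L * norm h"
      by (rule abs_net_tangent_le) (use assms abs_input_le in auto)
    ultimately show "\<bar>2 * (net l idx \<xi> act L x i - f x i)
        * net_tangent l idx \<xi> act act' x (bias l idx h) (wgt l idx h) L i\<bar>
        \<le> 2 * (input_bound l M ?X L + \<bar>f x i\<bar>) * (tangent_bound l M ?X C L * norm h)"
      unfolding abs_mult
      by (intro mult_mono) (auto simp: abs_triangle_ineq4 intro: order.trans[OF abs_triangle_ineq4])
  qed
  then show ?thesis
    by (simp add: loss_majorant_def sum_distrib_right mult.assoc)
qed

lemma borel_measurable_loss_deriv:
  assumes "\<And>k. act k \<in> borel_measurable borel" "\<And>k. act' k \<in> borel_measurable borel"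
  shows "(\<lambda>x. loss_deriv act act' \<xi> x h) \<in> borel_measurable \<mu>"
  unfolding loss_deriv_def
  using borel_measurable_net[OF borel_measurable_input assms(1)]
    borel_measurable_net_tangent[OF borel_measurable_input assms]
  by measurable

lemma has_derivative_risk:
  assumes act': "\<And>k y. (act k has_real_derivative act' k y) (at y)"
    and "\<And>k y. \<bar>act k y\<bar> \<le> \<bar>y\<bar>" and "C \<ge> 0" and "\<And>k y. \<bar>act' k y\<bar> \<le> C"
    and meas: "\<And>k. act k \<in> borel_measurable borel" "\<And>k. act' k \<in> borel_measurable borel"
    and int: "\<And>\<phi>. integrable \<mu> (\<lambda>x. \<Sum>i = 1..l L. (net l idx \<phi> act L x i - f x i)\<^sup>2)"
  shows "(risk l idx L act \<mu> f has_derivative (\<lambda>h. \<integral>x. loss_deriv act act' \<theta> x h \<partial>\<mu>)) (at \<theta>)"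
  unfolding risk_def[abs_def]
proof (rule has_derivative_integral[where \<delta>=1 and B="loss_majorant (norm \<theta> + 1) C"])
  fix \<xi> x assume "x \<in> space \<mu>"
  have "((\<lambda>\<eta>. (net l idx \<eta> act L x i - f x i)\<^sup>2) has_derivative
      (\<lambda>h. 2 * (net l idx \<xi> act L x i - f x i)
         * net_tangent l idx \<xi> act act' x (bias l idx h) (wgt l idx h) L i)) (at \<xi>)" for i
    by (auto intro!: derivative_eq_intros has_derivative_net[OF act'])
  then show "((\<lambda>\<eta>. \<Sum>i = 1..l L. (net l idx \<eta> act L x i - f x i)\<^sup>2) has_derivative loss_deriv act act' \<xi> x) (at \<xi>)"
    unfolding loss_deriv_def[abs_def] by (rule has_derivative_sum)
next
  fix \<xi> x h assume \<xi>: "\<xi> \<in> ball \<theta> 1" and "x \<in> space \<mu>"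
  have "\<bar>\<xi> $ c\<bar> \<le> norm \<theta> + 1" for c
    using component_le_norm_cart[of \<xi> c] norm_triangle_sub[of \<xi> \<theta>] \<xi>
    by (auto simp: dist_norm norm_minus_commute)
  then show "\<bar>loss_deriv act act' \<xi> x h\<bar> \<le> loss_majorant (norm \<theta> + 1) C x * norm h"
    by (intro abs_loss_deriv_le) (use \<open>x \<in> space \<mu>\<close> assms in auto)
qed (use int integrable_loss_majorant borel_measurable_loss_deriv[OF meas] in auto)

lemma net_tangent_grad_lyap:
  assumes inj: "inj_on idx {1..dsum l L}" and i: "i \<in> {1..l L}"
  shows "net_tangent l idx \<theta> act_inf act_inf_deriv x
      (bias l idx (grad (lyap l idx L f) \<theta>)) (wgt l idx (grad (lyap l idx L f) \<theta>)) L i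
    = 2 * real L * (net l idx \<theta> act_inf L x i - f (\<lambda>_. 0) i)"
proof -
  let ?T = "net_tangent l idx \<theta> act_inf act_inf_deriv x"
  let ?g = "grad (lyap l idx L f) \<theta>"
  define B where "B k i = real k * bias l idx \<theta> k i" for k i
  define B' where "B' k i = (if k = L then f (\<lambda>_. 0) i else 0)" for k i
  have "?T (bias l idx ?g) (wgt l idx ?g) L i
      = ?T (\<lambda>k i. 2 * B k i + (- 2 * real L) * B' k i) (\<lambda>k i j. 2 * wgt l idx \<theta> k i j + (- 2 * real L) * 0) L i"
    by (rule net_tangent_cong[THEN fun_cong])
       (simp_all add: bias_grad_lyap[OF inj] wgt_grad_lyap[OF inj] B_def B'_def)
  also have "\<dots> = 2 * ?T B (wgt l idx \<theta>) L i + (- 2 * real L) * ?T B' (\<lambda>_ _ _. 0) L i"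
    by (rule net_tangent_lincomb)
  also have "\<dots> = 2 * real L * (net l idx \<theta> act_inf L x i - f (\<lambda>_. 0) i)"
    using i L_pos unfolding B_def B'_def
    by (simp add: net_tangent_relu_homogeneous net_tangent_output_bias algebra_simps)
  finally show ?thesis .
qed

lemma loss_deriv_grad_lyap:
  assumes "inj_on idx {1..dsum l L}"
  shows "loss_deriv act_inf act_inf_deriv \<theta> x (grad (lyap l idx L f) \<theta>) = 4 * real L *
    (\<Sum>i = 1..l L. (net l idx \<theta> act_inf L x i - f x i) * (net l idx \<theta> act_inf L x i - f (\<lambda>_. 0) i))"
  unfolding loss_deriv_def sum_distrib_left
proof (intro sum.cong refl)
  fix i assume "i \<in> {1..l L}"
  then show "2 * (net l idx \<theta> act_inf L x i - f x i) * net_tangent l idx \<theta> act_inf act_inf_deriv x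
      (bias l idx (grad (lyap l idx L f) \<theta>)) (wgt l idx (grad (lyap l idx L f) \<theta>)) L i
    = 4 * real L * ((net l idx \<theta> act_inf L x i - f x i) * (net l idx \<theta> act_inf L x i - f (\<lambda>_. 0) i))"
    by (simp add: net_tangent_grad_lyap[OF assms] algebra_simps)
qed

end

section \<open>Smooth approximations of ReLU\<close>

definition net_error_rate :: "nat \<Rightarrow> real \<Rightarrow> real" where
  "net_error_rate k r = (if k = 0 then 0 else r powr (- 1 / real k))"

lemma net_error_rate_nonneg: "net_error_rate k r \<ge> 0"
  by (simp add: net_error_rate_def)

lemma net_error_rate_le: "r \<ge> 1 \<Longrightarrow> net_error_rate k r \<le> r powr (- 1 / real (Suc k))"
  by (auto simp: net_error_rate_def divide_simps intro!: powr_mono)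

lemma tendsto_net_error_rate: "((\<lambda>r. net_error_rate k r) \<longlongrightarrow> 0) at_top"
  unfolding net_error_rate_def by (cases "k = 0") (auto intro!: tendsto_neg_powr filterlim_ident)

lemma tendsto_net_error_rate_ratio: "((\<lambda>r. net_error_rate k r * r powr (1 / real (Suc k))) \<longlongrightarrow> 0) at_top"
proof (cases "k = 0")
  case False
  have "1 / real (Suc k) < 1 / real k"
    using False by (intro divide_strict_left_mono) auto
  then have "- 1 / real k + 1 / real (Suc k) < 0"
    by simp
  then have "((\<lambda>r. r powr (- 1 / real k + 1 / real (Suc k))) \<longlongrightarrow> 0) at_top"
    by (intro tendsto_neg_powr filterlim_ident)
  moreover have "\<forall>\<^sub>F r in at_top.
      r powr (- 1 / real k + 1 / real (Suc k)) = net_error_rate k r * r powr (1 / real (Suc k))"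
    using eventually_gt_at_top[of 0]
    by eventually_elim (use False in \<open>simp add: net_error_rate_def powr_add[symmetric]\<close>)
  ultimately show ?thesis
    by (rule Lim_transform_eventually)
qed (simp add: net_error_rate_def)

lemma powr_inverse_ge_1: "r \<ge> 1 \<Longrightarrow> r powr (1 / real k) \<ge> 1"
  by (rule ge_one_powr_ge_zero) auto

lemma powr_neg_inverse: "r > 0 \<Longrightarrow> c * r powr (- 1 / real k) = c / r powr (1 / real k)"
  by (simp add: powr_minus_divide divide_inverse)

lemma tendsto_powr_neg_Suc: "((\<lambda>r::real. r powr (- 1 / real (Suc k))) \<longlongrightarrow> 0) at_top"
  by (intro tendsto_neg_powr filterlim_ident) simp

locale relu_approximation =
  fixes R :: "real \<Rightarrow> real \<Rightarrow> real" and AA BB :: real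
  assumes AB: "0 < AA" "AA < BB"
    and R_C1: "\<forall>r \<ge> 1. (\<forall>x. R r differentiable (at x)) \<and> continuous_on UNIV (deriv (R r))"
    and R_zero: "\<forall>r \<ge> 1. \<forall>x. x \<le> AA / r \<longrightarrow> R r x = 0"
    and R_bounds: "\<forall>r \<ge> 1. \<forall>y. 0 \<le> R r y \<and> R r y \<le> max y 0"
    and R_id: "\<forall>r \<ge> 1. \<forall>z. z \<ge> BB / r \<longrightarrow> R r z = z"
begin

definition act_fin_deriv :: "real \<Rightarrow> nat \<Rightarrow> real \<Rightarrow> real" where
  "act_fin_deriv r k = deriv (act_fin R r k)"

lemma abs_act_fin_le:
  assumes "r \<ge> 1"
  shows "\<bar>act_fin R r k y\<bar> \<le> \<bar>y\<bar>"
proof -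
  have "0 \<le> act_fin R r k y \<and> act_fin R r k y \<le> max y 0"
    using R_bounds powr_inverse_ge_1[OF assms, of k] unfolding act_fin_def by blast
  then show ?thesis
    by linarith
qed

lemma act_fin_has_derivative: "r \<ge> 1 \<Longrightarrow> (act_fin R r k has_real_derivative act_fin_deriv r k y) (at y)"
  using R_C1 powr_inverse_ge_1[of r k]
  by (simp add: act_fin_def act_fin_deriv_def DERIV_deriv_iff_real_differentiable)

lemma abs_act_fin_deriv_le:
  "r \<ge> 1 \<Longrightarrow> \<forall>r \<ge> 1. \<forall>x. \<bar>deriv (R r) x\<bar> \<le> C \<Longrightarrow> \<bar>act_fin_deriv r k y\<bar> \<le> C"
  using powr_inverse_ge_1[of r k] by (simp add: act_fin_deriv_def act_fin_def)

lemma borel_measurable_act_fin: "r \<ge> 1 \<Longrightarrow> act_fin R r k \<in> borel_measurable borel"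
  using R_C1 powr_inverse_ge_1[of r k] unfolding act_fin_def
  by (intro borel_measurable_continuous_onI continuous_at_imp_continuous_on ballI
      differentiable_imp_continuous_within) auto

lemma borel_measurable_act_fin_deriv: "r \<ge> 1 \<Longrightarrow> act_fin_deriv r k \<in> borel_measurable borel"
  using R_C1 powr_inverse_ge_1[of r k] unfolding act_fin_deriv_def act_fin_def
  by (intro borel_measurable_continuous_onI) auto

lemma abs_act_fin_minus_act_inf_le:
  assumes "r \<ge> 1"
  shows "\<bar>act_fin R r k y - act_inf k z\<bar> \<le> BB * r powr (- 1 / real k) + \<bar>y - z\<bar>"
proof -
  define \<rho> where "\<rho> = r powr (1 / real k)"
  have \<rho>: "\<rho> \<ge> 1"
    unfolding \<rho>_def using assms by (rule powr_inverse_ge_1)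
  have "BB / \<rho> > 0"
    using AB \<rho> by simp
  moreover have "0 \<le> R \<rho> y \<and> R \<rho> y \<le> max y 0" "y \<ge> BB / \<rho> \<Longrightarrow> R \<rho> y = y"
    using R_bounds R_id \<rho> by blast+
  ultimately have "\<bar>R \<rho> y - relu y\<bar> \<le> BB / \<rho>"
    by (cases "y \<ge> BB / \<rho>") (auto simp: relu_def)
  moreover have "\<bar>relu y - relu z\<bar> \<le> \<bar>y - z\<bar>"
    by (auto simp: relu_def)
  ultimately show ?thesis
    using assms powr_neg_inverse[of r BB k] by (simp add: act_fin_def act_inf_def \<rho>_def)
qed

lemma act_fin_deriv_eq_1:
  assumes "r \<ge> 1" "y > BB * r powr (- 1 / real k)"
  shows "act_fin_deriv r k y = 1"
proof -
  define \<rho> where "\<rho> = r powr (1 / real k)"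
  have "\<rho> \<ge> 1" "y > BB / \<rho>"
    using assms powr_inverse_ge_1 powr_neg_inverse[of r BB k] by (simp_all add: \<rho>_def)
  then have "(R \<rho> has_field_derivative 1) (at y)"
    by (intro has_field_derivative_transform_within_open[OF DERIV_ident, where S="{BB / \<rho> <..}"])
       (use R_id in auto)
  then show ?thesis
    by (simp add: act_fin_deriv_def act_fin_def \<rho>_def DERIV_imp_deriv)
qed

lemma act_fin_deriv_eq_0:
  assumes "r \<ge> 1" "y < AA * r powr (- 1 / real k)"
  shows "act_fin_deriv r k y = 0"
proof -
  define \<rho> where "\<rho> = r powr (1 / real k)"
  have "\<rho> \<ge> 1" "y < AA / \<rho>"
    using assms powr_inverse_ge_1 powr_neg_inverse[of r AA k] by (simp_all add: \<rho>_def)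
  then have "(R \<rho> has_field_derivative 0) (at y)"
    by (intro has_field_derivative_transform_within_open[OF DERIV_const, where S="{..< AA / \<rho>}"])
       (use R_zero in \<open>auto simp: less_imp_le\<close>)
  then show ?thesis
    by (simp add: act_fin_deriv_def act_fin_def \<rho>_def DERIV_imp_deriv)
qed

lemma net_act_fin_error:
  "\<exists>c \<ge> 0. \<forall>r \<ge> 1. \<forall>i. \<bar>net l idx \<theta> (act_fin R r) (Suc k) x i - net l idx \<theta> act_inf (Suc k) x i\<bar>
     \<le> c * net_error_rate k r"
proof (induction k)
  case 0
  show ?case
    by (intro exI[of _ 0]) (simp add: net_Suc layer_input_def)
next
  case (Suc k)
  then obtain c where c: "c \<ge> 0" "\<And>r i. r \<ge> 1 \<Longrightarrow>
      \<bar>net l idx \<theta> (act_fin R r) (Suc k) x i - net l idx \<theta> act_inf (Suc k) x i\<bar> \<le> c * net_error_rate k r"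
    by blast
  show ?case
  proof (intro exI[of _ "real (l (Suc k)) * norm \<theta> * (BB + c)"] conjI allI impI)
    show "real (l (Suc k)) * norm \<theta> * (BB + c) \<ge> 0"
      using c AB by simp
    fix r :: real and i assume r: "r \<ge> 1"
    have "\<bar>layer_input l idx \<theta> (act_fin R r) (Suc k) x j - layer_input l idx \<theta> act_inf (Suc k) x j\<bar>
        \<le> (BB + c) * net_error_rate (Suc k) r" for j
    proof -
      have "\<bar>layer_input l idx \<theta> (act_fin R r) (Suc k) x j - layer_input l idx \<theta> act_inf (Suc k) x j\<bar>
          \<le> BB * r powr (- 1 / real (Suc k)) + c * net_error_rate k r"
        using abs_act_fin_minus_act_inf_le[OF r, of "Suc k" "net l idx \<theta> (act_fin R r) (Suc k) x j"
            "net l idx \<theta> act_inf (Suc k) x j"] c(2)[OF r, of j]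
        by (simp add: layer_input_def)
      also have "\<dots> \<le> (BB + c) * net_error_rate (Suc k) r"
        using net_error_rate_le[OF r, of k] c(1) mult_left_mono
        by (fastforce simp: net_error_rate_def algebra_simps)
      finally show ?thesis .
    qed
    then show "\<bar>net l idx \<theta> (act_fin R r) (Suc (Suc k)) x i - net l idx \<theta> act_inf (Suc (Suc k)) x i\<bar>
        \<le> real (l (Suc k)) * norm \<theta> * (BB + c) * net_error_rate (Suc k) r"
      unfolding net_Suc[of _ _ _ _ "Suc k"] affine_map_diff
      using abs_affine_map_le[where M=0 and M'="norm \<theta>" and Y="(BB + c) * net_error_rate (Suc k) r"
          and l=l and B="\<lambda>_ _. 0" and k="Suc k" and W="wgt l idx \<theta>"] c(1) AB net_error_rate_nonneg
      by (simp add: abs_wgt_le_norm mult.assoc)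
  qed
qed

lemma tendsto_net_act_fin:
  "((\<lambda>r. net l idx \<theta> (act_fin R r) k x i) \<longlongrightarrow> net l idx \<theta> act_inf k x i) at_top"
proof (cases k)
  case (Suc k')
  obtain c where c: "\<And>r. r \<ge> 1 \<Longrightarrow>
      \<bar>net l idx \<theta> (act_fin R r) (Suc k') x i - net l idx \<theta> act_inf (Suc k') x i\<bar> \<le> c * net_error_rate k' r"
    using net_act_fin_error[of l idx \<theta> k' x] by blast
  have "((\<lambda>r. c * net_error_rate k' r) \<longlongrightarrow> 0) at_top"
    using tendsto_mult_right_zero[OF tendsto_net_error_rate] by simp
  then have "((\<lambda>r. net l idx \<theta> (act_fin R r) (Suc k') x i - net l idx \<theta> act_inf (Suc k') x i) \<longlongrightarrow> 0) at_top"
    by (rule Lim_null_comparison[rotated]) (use eventually_ge_at_top[of 1] in \<open>eventually_elim, simp add: c\<close>)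
  then show ?thesis
    using Suc by (simp add: LIM_zero_iff)
qed simp

lemma tendsto_layer_input_act_fin:
  "((\<lambda>r. layer_input l idx \<theta> (act_fin R r) k x j) \<longlongrightarrow> layer_input l idx \<theta> act_inf k x j) at_top"
proof (cases k)
  case (Suc k')
  have lim: "((\<lambda>r. BB * r powr (- 1 / real (Suc k'))
        + \<bar>net l idx \<theta> (act_fin R r) k x j - net l idx \<theta> act_inf k x j\<bar>)
      \<longlongrightarrow> BB * 0 + \<bar>net l idx \<theta> act_inf k x j - net l idx \<theta> act_inf k x j\<bar>) at_top"
    by (intro tendsto_intros tendsto_powr_neg_Suc tendsto_net_act_fin)
  have bound: "\<forall>\<^sub>F r in at_top.
      norm (act_fin R r k (net l idx \<theta> (act_fin R r) k x j) - act_inf k (net l idx \<theta> act_inf k x j))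
      \<le> BB * r powr (- 1 / real (Suc k')) + \<bar>net l idx \<theta> (act_fin R r) k x j - net l idx \<theta> act_inf k x j\<bar>"
    using eventually_ge_at_top[of 1]
    by eventually_elim (unfold real_norm_def Suc, erule abs_act_fin_minus_act_inf_le)
  have "((\<lambda>r. act_fin R r k (net l idx \<theta> (act_fin R r) k x j) - act_inf k (net l idx \<theta> act_inf k x j))
      \<longlongrightarrow> 0) at_top"
    by (rule Lim_null_comparison[OF bound]) (use lim in simp)
  then show ?thesis
    using Suc by (simp add: layer_input_def LIM_zero_iff)
qed (simp add: layer_input_def)

lemma eventually_net_act_fin_gt:
  assumes "net l idx \<theta> act_inf (Suc k) x i > 0"
  shows "\<forall>\<^sub>F r in at_top. net l idx \<theta> (act_fin R r) (Suc k) x i > BB * r powr (- 1 / real (Suc k))"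
proof -
  obtain c where c: "\<And>r. r \<ge> 1 \<Longrightarrow>
      \<bar>net l idx \<theta> (act_fin R r) (Suc k) x i - net l idx \<theta> act_inf (Suc k) x i\<bar> \<le> c * net_error_rate k r"
    using net_act_fin_error[of l idx \<theta> k x] by blast
  have "((\<lambda>r. c * net_error_rate k r + BB * r powr (- 1 / real (Suc k))) \<longlongrightarrow> c * 0 + BB * 0) at_top"
    by (intro tendsto_intros tendsto_net_error_rate tendsto_powr_neg_Suc)
  then have "\<forall>\<^sub>F r in at_top.
      c * net_error_rate k r + BB * r powr (- 1 / real (Suc k)) < net l idx \<theta> act_inf (Suc k) x i"
    using assms by (intro order_tendstoD) auto
  then show ?thesis
    using eventually_ge_at_top[of 1] by eventually_elim (use c in fastforce)
qed

lemma eventually_net_act_fin_lt: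
  assumes "net l idx \<theta> act_inf (Suc k) x i \<le> 0"
  shows "\<forall>\<^sub>F r in at_top. net l idx \<theta> (act_fin R r) (Suc k) x i < AA * r powr (- 1 / real (Suc k))"
proof -
  obtain c where c: "\<And>r. r \<ge> 1 \<Longrightarrow>
      \<bar>net l idx \<theta> (act_fin R r) (Suc k) x i - net l idx \<theta> act_inf (Suc k) x i\<bar> \<le> c * net_error_rate k r"
    using net_act_fin_error[of l idx \<theta> k x] by blast
  have "((\<lambda>r. c * (net_error_rate k r * r powr (1 / real (Suc k)))) \<longlongrightarrow> c * 0) at_top"
    by (intro tendsto_intros tendsto_net_error_rate_ratio)
  then have "\<forall>\<^sub>F r in at_top. c * (net_error_rate k r * r powr (1 / real (Suc k))) < AA"
    using AB by (intro order_tendstoD) auto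
  then show ?thesis
    using eventually_ge_at_top[of 1]
  proof eventually_elim
    case (elim r)
    have "r powr (1 / real (Suc k)) > 0"
      using elim by simp
    with elim(1) have "c * net_error_rate k r < AA / r powr (1 / real (Suc k))"
      by (simp add: pos_less_divide_eq mult.assoc)
    then have "c * net_error_rate k r < AA * r powr (- 1 / real (Suc k))"
      using powr_neg_inverse[of r AA "Suc k"] elim by simp
    then show ?case
      using assms c[OF elim(2)] by linarith
  qed
qed

text \<open>The activation of layer \<open>k + 1\<close> has its kink within distance of order \<open>r powr (- 1 / (k + 1))\<close>
  of \<open>0\<close>, while by \<open>net_act_fin_error\<close> its input is only perturbed by order \<open>r powr (- 1 / k)\<close>.
  Hence the derivative is eventually exactly \<open>1\<close> on positive and exactly \<open>0\<close> on non-positive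
  limit values, which is why \<open>act_inf_deriv\<close> vanishes at \<open>0\<close>.\<close>

lemma eventually_act_fin_deriv_eq:
  "\<forall>\<^sub>F r in at_top. act_fin_deriv r (Suc k) (net l idx \<theta> (act_fin R r) (Suc k) x i)
     = act_inf_deriv (Suc k) (net l idx \<theta> act_inf (Suc k) x i)"
proof (cases "net l idx \<theta> act_inf (Suc k) x i > 0")
  case True
  show ?thesis
    using eventually_net_act_fin_gt[OF True] eventually_ge_at_top[of 1]
    by eventually_elim (simp add: act_fin_deriv_eq_1 act_inf_deriv_def True)
next
  case False
  then have nonpos: "net l idx \<theta> act_inf (Suc k) x i \<le> 0"
    by simp
  show ?thesis
    using eventually_net_act_fin_lt[OF nonpos] eventually_ge_at_top[of 1]
    by eventually_elim (simp add: act_fin_deriv_eq_0 act_inf_deriv_def False)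
qed

lemma tendsto_net_tangent_act_fin:
  "((\<lambda>r. net_tangent l idx \<theta> (act_fin R r) (act_fin_deriv r) x B W k i)
     \<longlongrightarrow> net_tangent l idx \<theta> act_inf act_inf_deriv x B W k i) at_top"
proof (induction k arbitrary: i)
  case (Suc k)
  have "((\<lambda>r. act_fin_deriv r k (net l idx \<theta> (act_fin R r) k x j)
        * net_tangent l idx \<theta> (act_fin R r) (act_fin_deriv r) x B W k j)
      \<longlongrightarrow> act_inf_deriv k (net l idx \<theta> act_inf k x j)
        * net_tangent l idx \<theta> act_inf act_inf_deriv x B W k j) at_top" for j
  proof (cases k)
    case (Suc k')
    have "((\<lambda>r. act_fin_deriv r k (net l idx \<theta> (act_fin R r) k x j))
        \<longlongrightarrow> act_inf_deriv k (net l idx \<theta> act_inf k x j)) at_top"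
      using Suc eventually_act_fin_deriv_eq[of k' l idx \<theta> x j]
      by (auto intro: tendsto_eventually)
    then show ?thesis
      by (intro tendsto_mult Suc.IH)
  qed simp
  then show ?case
    unfolding net_tangent.simps
    by (intro tendsto_add tendsto_affine_map tendsto_layer_input_act_fin)
qed simp

end

section \<open>Convergence of the risk gradients\<close>

locale smoothed_risk = risk_setting L l idx a b \<mu> f + relu_approximation R AA BB
  for L l and idx :: "nat \<Rightarrow> 'd::finite" and a b \<mu> f R AA BB +
  assumes R_deriv_bdd: "\<exists>C. \<forall>r \<ge> 1. \<forall>x. \<bar>deriv (R r) x\<bar> \<le> C"
    and integrable_fin: "\<forall>r \<ge> 1. \<forall>\<phi>. integrable \<mu>
        (\<lambda>x. \<Sum>i = 1..l L. (net l idx \<phi> (act_fin R r) L x i - f x i)\<^sup>2)"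
begin

lemma R_deriv_boundE:
  obtains C where "C \<ge> 1" "\<forall>r \<ge> 1. \<forall>x. \<bar>deriv (R r) x\<bar> \<le> C"
proof -
  obtain C where "\<forall>r \<ge> 1. \<forall>x. \<bar>deriv (R r) x\<bar> \<le> C"
    using R_deriv_bdd by blast
  then show ?thesis
    by (intro that[of "max C 1"]) (auto intro: max.coboundedI1)
qed

lemma has_derivative_risk_act_fin:
  assumes "r \<ge> 1"
  shows "(risk l idx L (act_fin R r) \<mu> f has_derivative
    (\<lambda>h. \<integral>x. loss_deriv (act_fin R r) (act_fin_deriv r) \<theta> x h \<partial>\<mu>)) (at \<theta>)"
proof -
  obtain C where "C \<ge> 1" "\<forall>r \<ge> 1. \<forall>x. \<bar>deriv (R r) x\<bar> \<le> C"
    by (rule R_deriv_boundE)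
  then show ?thesis
    using assms integrable_fin
    by (intro has_derivative_risk[where C=C] act_fin_has_derivative abs_act_fin_le
        abs_act_fin_deriv_le borel_measurable_act_fin borel_measurable_act_fin_deriv) auto
qed

lemma tendsto_loss_deriv_act_fin:
  "((\<lambda>r. loss_deriv (act_fin R r) (act_fin_deriv r) \<theta> x h) \<longlongrightarrow> loss_deriv act_inf act_inf_deriv \<theta> x h) at_top"
  unfolding loss_deriv_def
  by (intro tendsto_intros tendsto_net_act_fin tendsto_net_tangent_act_fin)

lemma tendsto_integral_loss_deriv_act_fin:
  "((\<lambda>r. \<integral>x. loss_deriv (act_fin R r) (act_fin_deriv r) \<theta> x h \<partial>\<mu>)
     \<longlongrightarrow> \<integral>x. loss_deriv act_inf act_inf_deriv \<theta> x h \<partial>\<mu>) at_top"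
proof -
  obtain C where C: "C \<ge> 1" "\<forall>r \<ge> 1. \<forall>x. \<bar>deriv (R r) x\<bar> \<le> C"
    by (rule R_deriv_boundE)
  \<comment> \<open>the smooth activations are only controlled for \<open>r \<ge> 1\<close>\<close>
  let ?s = "\<lambda>r x. loss_deriv (act_fin R (max r 1)) (act_fin_deriv (max r 1)) \<theta> x h"
  have "((\<lambda>r. \<integral>x. ?s r x \<partial>\<mu>) \<longlongrightarrow> \<integral>x. loss_deriv act_inf act_inf_deriv \<theta> x h \<partial>\<mu>) at_top"
  proof (rule integral_dominated_convergence_at_top[where w="\<lambda>x. loss_majorant (norm \<theta>) C x * norm h"])
    show "(\<lambda>x. loss_deriv act_inf act_inf_deriv \<theta> x h) \<in> borel_measurable \<mu>"
      by (rule borel_measurable_loss_deriv)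
         (simp_all add: act_inf_def relu_def[abs_def] act_inf_deriv_def[abs_def])
    show "?s r \<in> borel_measurable \<mu>" for r
      by (intro borel_measurable_loss_deriv borel_measurable_act_fin borel_measurable_act_fin_deriv) simp_all
    show "integrable \<mu> (\<lambda>x. loss_majorant (norm \<theta>) C x * norm h)"
      using integrable_loss_majorant by simp
    have "\<forall>\<^sub>F r in at_top. ?s r x = loss_deriv (act_fin R r) (act_fin_deriv r) \<theta> x h" for x
      using eventually_ge_at_top[of 1] by eventually_elim (simp add: max_absorb1)
    then show "AE x in \<mu>. ((\<lambda>r. ?s r x) \<longlongrightarrow> loss_deriv act_inf act_inf_deriv \<theta> x h) at_top"
      by (intro AE_I2) (auto intro: Lim_transform_eventually[OF tendsto_loss_deriv_act_fin] simp: eq_commute)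
    show "\<forall>\<^sub>F r in at_top. AE x in \<mu>. norm (?s r x) \<le> loss_majorant (norm \<theta>) C x * norm h"
      using C by (intro always_eventually allI AE_I2)
        (auto intro!: abs_loss_deriv_le abs_act_fin_le abs_act_fin_deriv_le component_le_norm_cart)
  qed
  moreover have "\<forall>\<^sub>F r in at_top. (\<integral>x. ?s r x \<partial>\<mu>) = (\<integral>x. loss_deriv (act_fin R r) (act_fin_deriv r) \<theta> x h \<partial>\<mu>)"
    using eventually_ge_at_top[of 1] by eventually_elim (simp add: max_absorb1)
  ultimately show ?thesis
    by (rule Lim_transform_eventually)
qed

lemma tendsto_inner_grad_risk:
  "((\<lambda>r. grad (risk l idx L (act_fin R r) \<mu> f) \<theta> \<bullet> h) \<longlongrightarrow> \<integral>x. loss_deriv act_inf act_inf_deriv \<theta> x h \<partial>\<mu>) at_top"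
proof (rule Lim_transform_eventually[OF tendsto_integral_loss_deriv_act_fin])
  show "\<forall>\<^sub>F r in at_top. (\<integral>x. loss_deriv (act_fin R r) (act_fin_deriv r) \<theta> x h \<partial>\<mu>)
      = grad (risk l idx L (act_fin R r) \<mu> f) \<theta> \<bullet> h"
    using eventually_ge_at_top[of 1]
    by eventually_elim (simp add: inner_grad[OF has_derivative_risk_act_fin])
qed

lemma tendsto_grad_risk:
  "((\<lambda>r. grad (risk l idx L (act_fin R r) \<mu> f) \<theta>)
     \<longlongrightarrow> (\<chi> c. \<integral>x. loss_deriv act_inf act_inf_deriv \<theta> x (axis c 1) \<partial>\<mu>)) at_top"
proof (rule vec_tendstoI)
  fix c :: 'd
  show "((\<lambda>r. grad (risk l idx L (act_fin R r) \<mu> f) \<theta> $ c)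
      \<longlongrightarrow> (\<chi> c. \<integral>x. loss_deriv act_inf act_inf_deriv \<theta> x (axis c 1) \<partial>\<mu>) $ c) at_top"
    using tendsto_inner_grad_risk[of \<theta> "axis c 1"] unfolding cart_eq_inner_axis[symmetric] by simp
qed

end

theorem proposition3p2:
  fixes L dd :: nat and l :: "nat \<Rightarrow> nat" and a b AA BB :: real
    and idx :: "nat \<Rightarrow> 'd::finite"
    and R :: "real \<Rightarrow> real \<Rightarrow> real"
    and \<mu> :: "(nat \<Rightarrow> real) measure"
    and f :: "(nat \<Rightarrow> real) \<Rightarrow> (nat \<Rightarrow> real)"
    and G :: "real^'d \<Rightarrow> real^'d"
    and \<theta> :: "real^'d"
  assumes L_pos: "L \<ge> 1"
    and l_pos: "\<forall>k. l k \<ge> 1"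
    and ab: "a < b"
    and AB: "0 < AA" "AA < BB"
    and dd_def: "dd = (\<Sum>k = 1..L. l k * (l (k - 1) + 1))"
    and idx_bij: "bij_betw idx {1..dd} (UNIV :: 'd set)"
    and R_C1: "\<forall>r \<ge> 1. (\<forall>x. R r differentiable (at x)) \<and> continuous_on UNIV (deriv (R r))"
    and R_zero: "\<forall>r \<ge> 1. \<forall>x. x \<le> AA / r \<longrightarrow> R r x = 0"
    and R_bounds: "\<forall>r \<ge> 1. \<forall>y. 0 \<le> R r y \<and> R r y \<le> max y 0"
    and R_id: "\<forall>r \<ge> 1. \<forall>z. z \<ge> BB / r \<longrightarrow> R r z = z"
    and R_deriv_bdd: "\<exists>C. \<forall>r \<ge> 1. \<forall>x. \<bar>deriv (R r) x\<bar> \<le> C"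
    and mu_sets: "sets \<mu> = sets (Pi\<^sub>M {1..l 0} (\<lambda>_. restrict_space lborel {a..b}))"
    and mu_finite: "emeasure \<mu> (space \<mu>) < \<infinity>"
    and f_meas: "\<forall>i. (\<lambda>x. f x i) \<in> borel_measurable \<mu>"
    and integrable_fin: "\<forall>r \<ge> 1. \<forall>\<phi>. integrable \<mu>
        (\<lambda>x. \<Sum>i = 1..l L. (net l idx \<phi> (act_fin R r) L x i - f x i)\<^sup>2)"
    and integrable_inf: "\<forall>\<phi>. integrable \<mu>
        (\<lambda>x. \<Sum>i = 1..l L. (net l idx \<phi> act_inf L x i - f x i)\<^sup>2)"
    and G_def: "\<forall>\<phi>. (\<exists>g. ((\<lambda>r. grad (risk l idx L (act_fin R r) \<mu> f) \<phi>) \<longlongrightarrow> g) at_top)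
        \<longrightarrow> ((\<lambda>r. grad (risk l idx L (act_fin R r) \<mu> f) \<phi>) \<longlongrightarrow> G \<phi>) at_top"
  shows "inner (grad (lyap l idx L f) \<theta>) (G \<theta>) =
    4 * real L * (\<integral>x. (\<Sum>i = 1..l L.
        (net l idx \<theta> act_inf L x i - f x i) * (net l idx \<theta> act_inf L x i - f (\<lambda>_. 0) i)) \<partial>\<mu>)"
proof -
  interpret smoothed_risk L l idx a b \<mu> f R AA BB
  proof
    show "integrable \<mu> (\<lambda>x. \<Sum>i = 1..l L. (f x i)\<^sup>2)"
      using integrable_inf[rule_format, of 0] by (simp add: net_zero_params)
  qed (use assms in auto)
  let ?gV = "grad (lyap l idx L f) \<theta>"
  let ?D = "\<lambda>h. \<integral>x. loss_deriv act_inf act_inf_deriv \<theta> x h \<partial>\<mu>"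
  have "((\<lambda>r. grad (risk l idx L (act_fin R r) \<mu> f) \<theta>) \<longlongrightarrow> G \<theta>) at_top"
    using G_def tendsto_grad_risk by blast
  then have "((\<lambda>r. grad (risk l idx L (act_fin R r) \<mu> f) \<theta> \<bullet> ?gV) \<longlongrightarrow> G \<theta> \<bullet> ?gV) at_top"
    by (intro tendsto_intros)
  with tendsto_inner_grad_risk have "G \<theta> \<bullet> ?gV = ?D ?gV"
    using tendsto_unique trivial_limit_at_top_linorder by blast
  moreover have "inj_on idx {1..dsum l L}"
    using idx_bij bij_betw_imp_inj_on by (simp add: dd_def dsum_def)
  ultimately show ?thesis
    by (simp add: inner_commute loss_deriv_grad_lyap)
qed

end
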